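(* Let $v>0$ entrywise, $B\in\mathbb{R}^n_{>0}$. For all $(b,\delta),(b',\delta')\in\mathcal{B}$ with $b,\delta$ having strictly positive entries, $$\varphi(b')\le\varphi(b)+\langle\nabla\varphi(b),b'-b\rangle+\sum_{i,j}b'_{ij}\log\frac{b'_{ij}}{b_{ij}}+\sum_i\delta'_i\log\frac{\delta'_i}{\delta_i}.$$
   Context: QL-Shmyrev program: $\mathcal{B}=\{(b,\delta)\in\mathbb{R}^{n\times m}\times\mathbb{R}^n: b\ge0,\delta\ge0,\sum_jb_{ij}+\delta_i=B_i\ \forall i\}$, $p_j(b)=\sum_ib_{ij}$, $\varphi(b)=-\sum_{i,j}(1+\log v_{ij})b_{ij}+\sum_jp_j(b)\log p_j(b)$; $\nabla\varphi(b)$ is the gradient with respect to $b$, with entries $\log(p_j(b)/v_{ij})$. Convention $0\log0=0$. *)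

theory Defs
  imports "HOL-Analysis.Analysis"
begin

text \<open>Buyers are indexed by i < n, goods by j < m. Bids b :: nat => nat => real
  (b i j), leftover budgets delta :: nat => real.\<close>

definition xlogx :: "real \<Rightarrow> real" where
  "xlogx x = (if x = 0 then 0 else x * ln x)"

definition feasible :: "nat \<Rightarrow> nat \<Rightarrow> (nat \<Rightarrow> real) \<Rightarrow> (nat \<Rightarrow> nat \<Rightarrow> real) \<Rightarrow> (nat \<Rightarrow> real) \<Rightarrow> bool" where
  "feasible n m B b \<delta> \<longleftrightarrow>
     (\<forall>i<n. \<forall>j<m. b i j \<ge> 0) \<and> (\<forall>i<n. \<delta> i \<ge> 0) \<and>
     (\<forall>i<n. (\<Sum>j<m. b i j) + \<delta> i = B i)"

definition price :: "nat \<Rightarrow> (nat \<Rightarrow> nat \<Rightarrow> real) \<Rightarrow> nat \<Rightarrow> real" where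
  "price n b j = (\<Sum>i<n. b i j)"

definition phi :: "nat \<Rightarrow> nat \<Rightarrow> (nat \<Rightarrow> nat \<Rightarrow> real) \<Rightarrow> (nat \<Rightarrow> nat \<Rightarrow> real) \<Rightarrow> real" where
  "phi n m v b = - (\<Sum>i<n. \<Sum>j<m. (1 + ln (v i j)) * b i j)
                 + (\<Sum>j<m. xlogx (price n b j))"

definition grad_phi :: "nat \<Rightarrow> (nat \<Rightarrow> nat \<Rightarrow> real) \<Rightarrow> (nat \<Rightarrow> nat \<Rightarrow> real) \<Rightarrow> nat \<Rightarrow> nat \<Rightarrow> real" where
  "grad_phi n v b i j = ln (price n b j / v i j)"

end

theory Submission
  imports Defs
begin

text \<open>The part of \<open>phi\<close> that is linear in the bids drops out of its Bregman divergence,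
  which in the prices \<open>p = price b\<close>, \<open>p' = price b'\<close> becomes
  \<open>\<Sum>j. p' j * ln (p' j / p j) + (p j - p' j)\<close>. By the log-sum inequality the entropy part is
  bounded by the entropy of the bids \<open>b'\<close> relative to \<open>b\<close>. Since both bid profiles exhaust the
  same budgets, \<open>\<Sum>j. p j - p' j\<close> equals \<open>\<Sum>i. \<delta>' i - \<delta> i\<close>, which \<open>ln t \<le> t - 1\<close>
  bounds by the entropy of \<open>\<delta>'\<close> relative to \<open>\<delta>\<close>.\<close>

definition rel_entr :: "real \<Rightarrow> real \<Rightarrow> real" where
  "rel_entr x y = (if x = 0 then 0 else x * ln (x / y))"

lemma rel_entr_ge_diff:
  assumes "x \<ge> 0" "y > 0"
  shows "x - y \<le> rel_entr x y"
proof (cases "x = 0")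
  case True
  then show ?thesis using assms by (simp add: rel_entr_def)
next
  case False
  with assms have x: "x > 0" by simp
  have "ln (y / x) \<le> y / x - 1"
    using x assms by (intro ln_le_minus_one) auto
  then have "1 - y / x \<le> ln (x / y)"
    using x assms by (simp add: ln_div)
  then have "x * (1 - y / x) \<le> x * ln (x / y)"
    using x by (intro mult_left_mono) auto
  also have "x * (1 - y / x) = x - y"
    using x by (simp add: field_simps)
  finally show ?thesis
    using False by (simp add: rel_entr_def)
qed

lemma rel_entr_sum_le:
  assumes fin: "finite I" and y_pos: "\<forall>i\<in>I. y i > 0" and x_nonneg: "\<forall>i\<in>I. x i \<ge> 0"
  shows "rel_entr (\<Sum>i\<in>I. x i) (\<Sum>i\<in>I. y i) \<le> (\<Sum>i\<in>I. rel_entr (x i) (y i))"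
proof -
  define X where "X = (\<Sum>i\<in>I. x i)"
  define Y where "Y = (\<Sum>i\<in>I. y i)"
  show ?thesis
  proof (cases "X = 0")
    case True
    then have "\<forall>i\<in>I. x i = 0"
      using sum_nonneg_eq_0_iff[OF fin] x_nonneg unfolding X_def by blast
    then show ?thesis by (simp add: rel_entr_def)
  next
    case False
    then have "I \<noteq> {}" unfolding X_def by auto
    then have Y: "Y > 0" unfolding Y_def using fin y_pos by (intro sum_pos) auto
    have X: "X > 0"
      using False x_nonneg unfolding X_def by (metis order.not_eq_order_implies_strict sum_nonneg)
    \<comment> \<open>Compare each \<open>x\<^sub>i\<close> with the rescaled \<open>y\<^sub>i X / Y\<close>, which has the same total as \<open>x\<close>.\<close>
    have termwise: "x i - y i * X / Y \<le> rel_entr (x i) (y i) - x i * ln (X / Y)"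
      if i: "i \<in> I" for i
    proof (cases "x i = 0")
      case True
      have "y i * X / Y \<ge> 0" using y_pos i X Y by (auto intro!: divide_nonneg_pos)
      then show ?thesis using True by (simp add: rel_entr_def)
    next
      case False
      have xy: "y i > 0" "x i > 0" using y_pos x_nonneg i False by force+
      have "x i - y i * X / Y \<le> rel_entr (x i) (y i * X / Y)"
        using xy X Y by (intro rel_entr_ge_diff) auto
      also have "\<dots> = rel_entr (x i) (y i) - x i * ln (X / Y)"
        using xy X Y by (simp add: rel_entr_def ln_div ln_mult algebra_simps)
      finally show ?thesis .
    qed
    have "0 = (\<Sum>i\<in>I. x i - y i * X / Y)"
      using Y by (simp add: sum_subtractf X_def Y_def sum_divide_distrib[symmetric]
          sum_distrib_right[symmetric])
    also have "\<dots> \<le> (\<Sum>i\<in>I. rel_entr (x i) (y i) - x i * ln (X / Y))"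
      using termwise by (intro sum_mono)
    also have "\<dots> = (\<Sum>i\<in>I. rel_entr (x i) (y i)) - rel_entr X Y"
      using False by (simp add: sum_subtractf X_def sum_distrib_right rel_entr_def)
    finally show ?thesis unfolding X_def Y_def by simp
  qed
qed

lemma xlogx_bregman_eq:
  assumes "y > 0"
  shows "xlogx x - xlogx y - (1 + ln y) * (x - y) = rel_entr x y + (y - x)"
  using assms by (auto simp: xlogx_def rel_entr_def ln_div algebra_simps)

lemma price_pos:
  assumes "n > 0" "\<forall>i<n. b i j > 0"
  shows "price n b j > 0"
  unfolding price_def using assms by (intro sum_pos) auto

lemma sum_bids_weighted_eq_price:
  "(\<Sum>i<n. \<Sum>j<m. c j * b i j) = (\<Sum>j<m. c j * price n b j)"
  unfolding price_def by (subst sum.swap) (simp add: sum_distrib_left)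

lemma phi_bregman_eq:
  assumes v_pos: "\<forall>i<n. \<forall>j<m. v i j > 0" and p_pos: "\<forall>j<m. price n b j > 0"
  shows "phi n m v b' - phi n m v b - (\<Sum>i<n. \<Sum>j<m. grad_phi n v b i j * (b' i j - b i j))
    = (\<Sum>j<m. xlogx (price n b' j) - xlogx (price n b j)
               - (1 + ln (price n b j)) * (price n b' j - price n b j))"
proof -
  let ?p = "price n b" and ?p' = "price n b'"
  have grad: "grad_phi n v b i j = (1 + ln (?p j)) - (1 + ln (v i j))" if "i < n" "j < m" for i j
  proof -
    have "?p j > 0" "v i j > 0" using that v_pos p_pos by auto
    then show ?thesis by (simp add: grad_phi_def ln_div)
  qed
  have "(\<Sum>i<n. \<Sum>j<m. grad_phi n v b i j * (b' i j - b i j))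
      = (\<Sum>i<n. \<Sum>j<m. (1 + ln (?p j)) * b' i j) - (\<Sum>i<n. \<Sum>j<m. (1 + ln (?p j)) * b i j)
        - ((\<Sum>i<n. \<Sum>j<m. (1 + ln (v i j)) * b' i j) - (\<Sum>i<n. \<Sum>j<m. (1 + ln (v i j)) * b i j))"
    by (simp add: grad sum_subtractf[symmetric] algebra_simps)
  also have "\<dots> = (\<Sum>j<m. (1 + ln (?p j)) * (?p' j - ?p j))
        + phi n m v b' - phi n m v b - ((\<Sum>j<m. xlogx (?p' j)) - (\<Sum>j<m. xlogx (?p j)))"
    unfolding sum_bids_weighted_eq_price phi_def by (simp add: sum_subtractf algebra_simps)
  finally show ?thesis by (simp add: sum_subtractf)
qed

lemma sum_price_diff_eq_sum_slack_diff:
  assumes "feasible n m B b \<delta>" "feasible n m B b' \<delta>'"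
  shows "(\<Sum>j<m. price n b j - price n b' j) = (\<Sum>i<n. \<delta>' i - \<delta> i)"
proof -
  have "(\<Sum>i<n. \<delta>' i - \<delta> i) = (\<Sum>i<n. (\<Sum>j<m. b i j) - (\<Sum>j<m. b' i j))"
    using assms unfolding feasible_def by (intro sum.cong) (auto simp: algebra_simps)
  then show ?thesis
    unfolding price_def sum_subtractf by (simp add: sum.swap[of _ "{..<n}"])
qed

theorem mainTheorem11:
  fixes n m :: nat and v b b' :: "nat \<Rightarrow> nat \<Rightarrow> real" and B \<delta> \<delta>' :: "nat \<Rightarrow> real"
  assumes v_pos: "\<forall>i<n. \<forall>j<m. v i j > 0"
    and B_pos: "\<forall>i<n. B i > 0"
    and feas: "feasible n m B b \<delta>"
    and feas': "feasible n m B b' \<delta>'"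
    and b_pos: "\<forall>i<n. \<forall>j<m. b i j > 0"
    and \<delta>_pos: "\<forall>i<n. \<delta> i > 0"
  shows "phi n m v b' \<le> phi n m v b
           + (\<Sum>i<n. \<Sum>j<m. grad_phi n v b i j * (b' i j - b i j))
           + (\<Sum>i<n. \<Sum>j<m. (if b' i j = 0 then 0 else b' i j * ln (b' i j / b i j)))
           + (\<Sum>i<n. (if \<delta>' i = 0 then 0 else \<delta>' i * ln (\<delta>' i / \<delta> i)))"
proof (cases "n = 0")
  case True
  then show ?thesis by (simp add: phi_def price_def)
next
  case False
  let ?p = "price n b" and ?p' = "price n b'"
  have p_pos: "\<forall>j<m. ?p j > 0" using False b_pos by (simp add: price_pos)
  have b'_nonneg: "\<forall>i<n. \<forall>j<m. b' i j \<ge> 0" and \<delta>'_nonneg: "\<forall>i<n. \<delta>' i \<ge> 0"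
    using feas' unfolding feasible_def by auto
  have "phi n m v b' - phi n m v b - (\<Sum>i<n. \<Sum>j<m. grad_phi n v b i j * (b' i j - b i j))
      = (\<Sum>j<m. rel_entr (?p' j) (?p j)) + (\<Sum>j<m. ?p j - ?p' j)"
    using p_pos by (simp add: phi_bregman_eq[OF v_pos] xlogx_bregman_eq sum.distrib[symmetric])
  also have "(\<Sum>j<m. rel_entr (?p' j) (?p j)) \<le> (\<Sum>j<m. \<Sum>i<n. rel_entr (b' i j) (b i j))"
    unfolding price_def using b_pos b'_nonneg by (intro sum_mono rel_entr_sum_le) auto
  also have "\<dots> = (\<Sum>i<n. \<Sum>j<m. (if b' i j = 0 then 0 else b' i j * ln (b' i j / b i j)))"
    by (subst sum.swap) (simp add: rel_entr_def)
  also have "(\<Sum>j<m. ?p j - ?p' j) \<le> (\<Sum>i<n. (if \<delta>' i = 0 then 0 else \<delta>' i * ln (\<delta>' i / \<delta> i)))"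
    unfolding sum_price_diff_eq_sum_slack_diff[OF feas feas']
    using rel_entr_ge_diff \<delta>'_nonneg \<delta>_pos by (intro sum_mono) (simp add: rel_entr_def)
  finally show ?thesis by simp
qed

end
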